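(* Let $M$ be a finite rectangular monoid, $k$ a field, and $e\in E(M)$. Then $(emene,emne)\in\mathrm{rad}^2(M)$ for all $m,n\in M$. In particular, if $B$ is a finite band, then $B/\mathrm{rad}^2(B)$ is a regular band.
   Context: $E(M)$ is the set of idempotents; $M$ is rectangular if each set $\{f\in E(M): MfM=MeM\}$ is closed under multiplication. $\mathrm{rad}^2(M)$ is the congruence on $M$ given by $(m,n)\in\mathrm{rad}^2(M)$ iff $m-n\in\mathrm{rad}(kM)^2$, where $\mathrm{rad}$ is the Jacobson radical. A band is a monoid in which every element is idempotent (bands are rectangular); a regular band is a band satisfying $xyxzx=xyzx$ for all $x,y,z$. *)

theory Defs
  imports Main
begin

text \<open>The monoid algebra kM of a finite monoid M over a field k is modelled as the
  functions M \<Rightarrow> k with convolution product.\<close>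

definition idempotents :: "'m::monoid_mult set" where
  "idempotents = {e. e * e = e}"

definition two_sided :: "'m::monoid_mult \<Rightarrow> 'm set" where
  "two_sided e = {a * e * b | a b. True}"

definition rectangular :: "'m::monoid_mult itself \<Rightarrow> bool" where
  "rectangular _ \<longleftrightarrow>
     (\<forall>e \<in> (idempotents :: 'm set). \<forall>f \<in> idempotents. \<forall>g \<in> idempotents.
        two_sided f = two_sided e \<and> two_sided g = two_sided e \<longrightarrow>
        f * g \<in> idempotents \<and> two_sided (f * g) = two_sided e)"

definition band :: "'m::monoid_mult itself \<Rightarrow> bool" where
  "band _ \<longleftrightarrow> (\<forall>x :: 'm. x * x = x)"

definition delta :: "'m \<Rightarrow> 'm \<Rightarrow> 'k::field" where
  "delta m = (\<lambda>x. if x = m then 1 else 0)"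

definition conv :: "('m::monoid_mult \<Rightarrow> 'k::field) \<Rightarrow> ('m \<Rightarrow> 'k) \<Rightarrow> ('m \<Rightarrow> 'k)" where
  "conv f g = (\<lambda>m. \<Sum>p \<in> {p. fst p * snd p = m}. f (fst p) * g (snd p))"

definition left_ideal :: "('m::monoid_mult \<Rightarrow> 'k::field) set \<Rightarrow> bool" where
  "left_ideal I \<longleftrightarrow> (\<lambda>_. 0) \<in> I \<and>
     (\<forall>x\<in>I. \<forall>y\<in>I. (\<lambda>t. x t + y t) \<in> I) \<and>
     (\<forall>x\<in>I. (\<lambda>t. - x t) \<in> I) \<and>
     (\<forall>a. \<forall>x\<in>I. conv a x \<in> I)"

definition maximal_left_ideal :: "('m::monoid_mult \<Rightarrow> 'k::field) set \<Rightarrow> bool" where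
  "maximal_left_ideal I \<longleftrightarrow> left_ideal I \<and> I \<noteq> UNIV \<and>
     (\<forall>J. left_ideal J \<and> I \<subseteq> J \<and> J \<noteq> UNIV \<longrightarrow> J = I)"

definition jrad :: "('m::monoid_mult \<Rightarrow> 'k::field) set" where
  "jrad = \<Inter> {I. maximal_left_ideal I}"

inductive_set rad_sq :: "('m::monoid_mult \<Rightarrow> 'k::field) set" where
  zero: "(\<lambda>_. 0) \<in> rad_sq"
| prod: "x \<in> jrad \<Longrightarrow> y \<in> jrad \<Longrightarrow> conv x y \<in> rad_sq"
| add: "a \<in> rad_sq \<Longrightarrow> b \<in> rad_sq \<Longrightarrow> (\<lambda>t. a t + b t) \<in> rad_sq"

definition rad2 :: "'k::field itself \<Rightarrow> ('m::monoid_mult \<times> 'm) set" where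
  "rad2 _ = {(m, n). (\<lambda>t. (delta m t :: 'k) - delta n t) \<in> (rad_sq :: ('m \<Rightarrow> 'k) set)}"

end

theory Submission
  imports Defs
begin

text \<open>Put \<open>Y\<^sub>1 = \<delta>(eme) - \<delta>(em)\<close> and \<open>Y\<^sub>2 = \<delta>(ne) - \<delta>(ene)\<close>. Then
  \<open>Y\<^sub>1 Y\<^sub>2 = \<delta>(emene) - \<delta>(emne)\<close>, so it suffices that \<open>Y\<^sub>1\<close> and \<open>Y\<^sub>2\<close> act as zero on every
  simple module \<open>kM/I\<close>. Such a module has an apex: an \<open>f\<close> acting nontrivially with \<open>MfM\<close>
  minimal, so that everything strictly below \<open>MfM\<close> acts as zero. Then \<open>\<delta>a - \<delta>b\<close> acts as zero
  as soon as \<open>fsatf = fsbtf\<close> whenever one of the two lies in the \<J>-class of \<open>f\<close>.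
  For \<open>Y\<^sub>1\<close> this asks \<open>(fsem)e(tf) = (fsem)(tf)\<close> when this \<J>-class \<open>J\<close> contains the product.
  Then \<open>J\<close> is regular, and by rectangularity its idempotents form a rectangular band, so inserting
  an idempotent of \<open>J\<close> between two elements of \<open>J\<close> does not change their product. Since
  \<open>fse \<in> Me\<close> lies in \<open>J\<close>, there is an idempotent \<open>w \<in> J\<close> with \<open>ew = w\<close>, and
  \<open>xey = xewy = xwy = xy\<close>. \<open>Y\<^sub>2\<close> is dual. Bands are rectangular, which gives the second part.\<close>

section \<open>Two-sided ideals of finite monoids\<close>

lemma two_sided_memI: "a * x * b \<in> two_sided x"
  unfolding two_sided_def by blast

lemma self_mem_two_sided: "x \<in> two_sided x"
  using two_sided_memI[of 1 x 1] by simp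

lemma two_sided_subset_iff: "two_sided y \<subseteq> two_sided x \<longleftrightarrow> y \<in> two_sided x"
proof
  assume "y \<in> two_sided x"
  then obtain c d where y: "y = c * x * d" by (auto simp: two_sided_def)
  show "two_sided y \<subseteq> two_sided x"
  proof
    fix z assume "z \<in> two_sided y"
    then obtain a b where "z = a * y * b" by (auto simp: two_sided_def)
    then have "z = (a * c) * x * (d * b)" by (simp add: y mult.assoc)
    then show "z \<in> two_sided x" by (simp add: two_sided_memI)
  qed
qed (use self_mem_two_sided in blast)

lemma two_sided_mult_subset_left: "two_sided (x * y) \<subseteq> two_sided x"
  unfolding two_sided_subset_iff by (metis two_sided_memI mult_1_left)

lemma two_sided_mult_subset_right: "two_sided (x * y) \<subseteq> two_sided y"
  unfolding two_sided_subset_iff by (metis two_sided_memI mult_1_right)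

lemma finite_monoid_idempotent_power:
  fixes a :: "'m::{monoid_mult,finite}"
  obtains n where "n > 0" "a ^ n * a ^ n = a ^ n"
proof -
  have "\<not> inj (\<lambda>n::nat. a ^ n)"
    using finite_imageD[of "\<lambda>n::nat. a ^ n" UNIV] by auto
  then obtain i j where ij: "i < j" "a ^ i = a ^ j"
    unfolding inj_def by (metis linorder_neqE_nat)
  define p where "p = j - i"
  have p: "p > 0" "a ^ (i + p) = a ^ i" using ij by (auto simp: p_def)
  have periodic: "a ^ (k + q * p) = a ^ k" if "k \<ge> i" for k q
  proof (induction q)
    case (Suc q)
    have "a ^ (k + Suc q * p) = a ^ (k - i + q * p) * a ^ (i + p)"
      using that by (simp flip: power_add add: algebra_simps)
    also have "\<dots> = a ^ (k + q * p)"
      using that p(2) by (simp flip: power_add add: algebra_simps)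
    finally show ?case using Suc by simp
  qed simp
  have "i \<le> (i + 1) * p" using p(1) by (cases p) simp_all
  then have "a ^ ((i + 1) * p) * a ^ ((i + 1) * p) = a ^ ((i + 1) * p)"
    using periodic[of "(i + 1) * p" "i + 1"] by (simp flip: power_add)
  moreover have "(i + 1) * p > 0" using p(1) by simp
  ultimately show ?thesis by (rule that[rotated])
qed

lemma power_sandwich:
  fixes y :: "'m::monoid_mult"
  assumes "y = a * y * b"
  shows "y = a ^ n * y * b ^ n"
proof (induction n)
  case (Suc n)
  have "a ^ Suc n * y * b ^ Suc n = a ^ n * (a * y * b) * b ^ n"
    by (simp only: power_Suc2[of a] power_Suc[of b] mult.assoc)
  then show ?case using assms Suc by simp
qed simp

lemma sandwich_absorb_right:
  fixes y :: "'m::{monoid_mult,finite}"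
  assumes "y = a * y * b"
  obtains n where "n > 0" "y = y * b ^ n"
proof -
  obtain n where n: "n > 0" "b ^ n * b ^ n = b ^ n"
    using finite_monoid_idempotent_power by blast
  have y: "y = a ^ n * y * b ^ n" using power_sandwich[OF assms] .
  have "y * b ^ n = a ^ n * y * (b ^ n * b ^ n)"
    by (subst (1) y) (simp add: mult.assoc)
  then show ?thesis using that n y by simp
qed

lemma sandwich_absorb_left:
  fixes y :: "'m::{monoid_mult,finite}"
  assumes "y = a * y * b"
  obtains n where "n > 0" "y = a ^ n * y"
proof -
  obtain n where n: "n > 0" "a ^ n * a ^ n = a ^ n"
    using finite_monoid_idempotent_power by blast
  have y: "y = a ^ n * y * b ^ n" using power_sandwich[OF assms] .
  have "a ^ n * y = (a ^ n * a ^ n) * y * b ^ n"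
    by (subst (1) y) (simp add: mult.assoc)
  then show ?thesis using that n y by simp
qed

lemma two_sided_stable_right:
  fixes y :: "'m::{monoid_mult,finite}"
  assumes "two_sided (y * z) = two_sided y"
  obtains w where "y = y * z * w"
proof -
  have "y \<in> two_sided (y * z)" using assms self_mem_two_sided[of y] by simp
  then obtain a b where "y = a * (y * z) * b" by (auto simp: two_sided_def)
  then have "y = a * y * (z * b)" by (simp add: mult.assoc)
  then obtain n where "n > 0" "y = y * (z * b) ^ n" by (rule sandwich_absorb_right)
  then have "y = y * z * (b * (z * b) ^ (n - 1))"
    by (cases n) (simp_all add: power_Suc mult.assoc)
  then show ?thesis by (rule that)
qed

lemma two_sided_stable_left:
  fixes y :: "'m::{monoid_mult,finite}"
  assumes "two_sided (z * y) = two_sided y"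
  obtains w where "y = w * z * y"
proof -
  have "y \<in> two_sided (z * y)" using assms self_mem_two_sided[of y] by simp
  then obtain a b where "y = a * (z * y) * b" by (auto simp: two_sided_def)
  then have "y = (a * z) * y * b" by (simp add: mult.assoc)
  then obtain n where "n > 0" "y = (a * z) ^ n * y" by (rule sandwich_absorb_left)
  then have "y = ((a * z) ^ (n - 1) * a) * z * y"
    by (cases n) (simp_all only: power_Suc2 mult.assoc, simp)
  then show ?thesis by (rule that)
qed

lemma regular_if_two_sided_idempotent:
  fixes c \<epsilon> :: "'m::{monoid_mult,finite}"
  assumes \<epsilon>: "\<epsilon> * \<epsilon> = \<epsilon>" and c: "two_sided c = two_sided \<epsilon>"
  obtains z where "c * z * c = c"
proof -
  have "\<epsilon> \<in> two_sided c" using c self_mem_two_sided[of \<epsilon>] by simp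
  then obtain a b where ab: "\<epsilon> = a * c * b" by (auto simp: two_sided_def)
  then have "two_sided \<epsilon> \<subseteq> two_sided (c * b)"
    by (metis two_sided_subset_iff two_sided_memI mult_1_right mult.assoc)
  then have cb: "two_sided (c * b) = two_sided c"
    using c two_sided_mult_subset_left[of c b] by blast
  then obtain w where w: "c * b * w = c" by (metis two_sided_stable_right)
  have "two_sided (a * (c * b)) = two_sided (c * b)"
    using ab cb c by (simp add: mult.assoc)
  then obtain v where v: "v * a * (c * b) = c * b" by (metis two_sided_stable_left)
  \<comment> \<open>\<open>c = v\<epsilon>w = v\<epsilon>\<epsilon>w = cbac\<close>\<close>
  have "c = v * (a * c * b) * (a * c * b) * w"
    using w v \<epsilon> ab by (metis mult.assoc)
  also have "\<dots> = c * (b * a) * c"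
    using w v by (metis mult.assoc)
  finally have "c * (b * a) * c = c" by simp
  then show ?thesis by (rule that)
qed

lemma two_sided_idempotent_right_unit:
  fixes c e \<epsilon> :: "'m::{monoid_mult,finite}"
  assumes \<epsilon>: "\<epsilon> * \<epsilon> = \<epsilon>" and c: "two_sided c = two_sided \<epsilon>" and ce: "c * e = c"
  obtains u where "u * u = u" "two_sided u = two_sided \<epsilon>" "c * u = c" "u * e = u"
proof -
  obtain z where z: "c * z * c = c" using regular_if_two_sided_idempotent[OF \<epsilon> c] .
  define u where "u = z * c"
  have "u * u = u" "c * u = c" "u * e = u"
    using z ce by (simp_all add: u_def mult.assoc)
  moreover have "two_sided u = two_sided \<epsilon>"
    using c two_sided_mult_subset_right[of z c] two_sided_mult_subset_right[of c u] \<open>c * u = c\<close>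
    by (simp add: u_def)
  ultimately show ?thesis using that by blast
qed

lemma two_sided_idempotent_left_unit:
  fixes c e \<epsilon> :: "'m::{monoid_mult,finite}"
  assumes \<epsilon>: "\<epsilon> * \<epsilon> = \<epsilon>" and c: "two_sided c = two_sided \<epsilon>" and ec: "e * c = c"
  obtains u where "u * u = u" "two_sided u = two_sided \<epsilon>" "u * c = c" "e * u = u"
proof -
  obtain z where z: "c * z * c = c" using regular_if_two_sided_idempotent[OF \<epsilon> c] .
  define u where "u = c * z"
  have "u * u = u" "u * c = c" "e * u = u"
    using z ec by (simp_all add: u_def) (metis mult.assoc)+
  moreover have "two_sided u = two_sided \<epsilon>"
    using c two_sided_mult_subset_left[of c z] two_sided_mult_subset_left[of u c] \<open>u * c = c\<close>
    by (simp add: u_def)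
  ultimately show ?thesis using that by blast
qed

lemma two_sided_idempotent_of_product:
  fixes x y :: "'m::{monoid_mult,finite}"
  assumes x: "two_sided x = two_sided (x * y)" and y: "two_sided y = two_sided (x * y)"
  obtains \<epsilon> where "\<epsilon> * \<epsilon> = \<epsilon>" "two_sided \<epsilon> = two_sided (x * y)"
proof -
  obtain w where "x = x * y * w" using two_sided_stable_right x by metis
  then have xk: "x = x * (y * w) ^ k" for k
    using power_sandwich[of x 1 "y * w" k] by (simp add: mult.assoc)
  obtain n where n: "n > 0" "(y * w) ^ n * (y * w) ^ n = (y * w) ^ n"
    using finite_monoid_idempotent_power by blast
  have "two_sided x \<subseteq> two_sided ((y * w) ^ n)"
    using xk[of n] two_sided_mult_subset_right by metis
  moreover have "two_sided ((y * w) ^ n) \<subseteq> two_sided y"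
    using n(1) two_sided_mult_subset_left[of y "w * (y * w) ^ (n - 1)"]
    by (cases n) (simp_all add: mult.assoc)
  ultimately show ?thesis using that n(2) x y by blast
qed

section \<open>Rectangular monoids\<close>

lemma rectangular_mult_idempotents:
  fixes f g :: "'m::monoid_mult"
  assumes "rectangular TYPE('m)" "f * f = f" "g * g = g" "two_sided g = two_sided f"
  shows "(f * g) * (f * g) = f * g" "two_sided (f * g) = two_sided f"
  using assms unfolding rectangular_def idempotents_def by blast+

lemma rectangular_idempotents_aba:
  fixes a b :: "'m::{monoid_mult,finite}"
  assumes rect: "rectangular TYPE('m)" and a: "a * a = a" and b: "b * b = b"
    and ab: "two_sided b = two_sided a"
  shows "a * b * a = a"
proof -
  note idem = rectangular_mult_idempotents[OF rect]
  have aba: "(a * b * a) * (a * b * a) = a * b * a" "two_sided (a * b * a) = two_sided a"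
    using idem[OF idem(1)[OF a b ab] a] idem(2)[OF a b ab] by simp_all
  obtain w where w: "a = w * (a * b) * a" using two_sided_stable_left aba(2) by metis
  have "a * b * a = a * (a * b * a)" using a by (simp flip: mult.assoc)
  also have "\<dots> = w * ((a * b * a) * (a * b * a))" by (subst (1) w) (simp add: mult.assoc)
  also have "\<dots> = a" using aba(1) w by (simp add: mult.assoc)
  finally show ?thesis .
qed

lemma rectangular_idempotents_abc:
  fixes a b c :: "'m::{monoid_mult,finite}"
  assumes rect: "rectangular TYPE('m)" and a: "a * a = a" and b: "b * b = b" and c: "c * c = c"
    and ab: "two_sided b = two_sided a" and ac: "two_sided c = two_sided a"
  shows "a * b * c = a * c"
proof -
  note idem = rectangular_mult_idempotents[OF rect]
  have ab': "(a * b) * (a * b) = a * b" "two_sided (a * b) = two_sided a"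
    using idem[OF a b ab] by simp_all
  have abc: "(a * b * c) * (a * b * c) = a * b * c" "two_sided (a * b * c) = two_sided a"
    using idem[OF ab'(1) c] ab'(2) ac by simp_all
  have abca: "(a * b * c * a) * (a * b * c * a) = a * b * c * a"
      "two_sided (a * b * c * a) = two_sided a"
    using idem[OF abc(1) a] abc(2) by simp_all
  have ac': "(a * c) * (a * c) = a * c" "two_sided (a * c) = two_sided a"
    using idem[OF a c ac] by simp_all
  have aca: "a * c * a = a" and cac: "c * a * c = c"
    using rectangular_idempotents_aba[OF rect a c ac] rectangular_idempotents_aba[OF rect c a] ac
    by simp_all
  have "a * c = (a * c) * (a * b * c * a) * (a * c)"
    using rectangular_idempotents_aba[OF rect ac'(1) abca(1)] abca(2) ac'(2) by simp
  also have "\<dots> = (a * c * a) * b * (c * (a * a) * c)" by (simp add: mult.assoc)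
  also have "\<dots> = a * b * c" using aca cac a by simp
  finally show ?thesis by simp
qed

lemma rectangular_insert_idempotent:
  fixes x y w \<epsilon> :: "'m::{monoid_mult,finite}"
  assumes rect: "rectangular TYPE('m)" and \<epsilon>: "\<epsilon> * \<epsilon> = \<epsilon>"
    and x: "two_sided x = two_sided \<epsilon>" and y: "two_sided y = two_sided \<epsilon>"
    and w: "w * w = w" "two_sided w = two_sided \<epsilon>"
  shows "x * w * y = x * y"
proof -
  obtain u where u: "u * u = u" "two_sided u = two_sided \<epsilon>" "x * u = x"
    using two_sided_idempotent_right_unit[OF \<epsilon> x, of 1] by auto
  obtain v where v: "v * v = v" "two_sided v = two_sided \<epsilon>" "v * y = y"
    using two_sided_idempotent_left_unit[OF \<epsilon> y, of 1] by auto
  have "x * w * y = (x * u) * w * (v * y)" using u(3) v(3) by simp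
  also have "\<dots> = x * (u * w * v) * y" by (simp add: mult.assoc)
  also have "\<dots> = x * (u * v) * y"
    using rectangular_idempotents_abc[OF rect u(1) w(1) v(1)] u(2) v(2) w(2) by simp
  also have "\<dots> = (x * u) * (v * y)" by (simp add: mult.assoc)
  also have "\<dots> = x * y" using u(3) v(3) by simp
  finally show ?thesis .
qed

lemma rectangular_two_sided_mult_idempotent_right:
  fixes g w \<epsilon> :: "'m::{monoid_mult,finite}"
  assumes rect: "rectangular TYPE('m)" and \<epsilon>: "\<epsilon> * \<epsilon> = \<epsilon>"
    and g: "two_sided g = two_sided \<epsilon>" and w: "w * w = w" "two_sided w = two_sided \<epsilon>"
  shows "two_sided (g * w) = two_sided \<epsilon>"
proof -
  obtain u where u: "u * u = u" "two_sided u = two_sided \<epsilon>" "g * u = g"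
    using two_sided_idempotent_right_unit[OF \<epsilon> g, of 1] by auto
  have "g = g * (u * w * u)" using rectangular_idempotents_aba[OF rect u(1) w(1)] u w by simp
  then have "g = (g * w) * u" using u(3) by (metis mult.assoc)
  then have "two_sided g \<subseteq> two_sided (g * w)" by (metis two_sided_mult_subset_left)
  then show ?thesis using g two_sided_mult_subset_left[of g w] by blast
qed

lemma rectangular_two_sided_mult_idempotent_left:
  fixes h w \<epsilon> :: "'m::{monoid_mult,finite}"
  assumes rect: "rectangular TYPE('m)" and \<epsilon>: "\<epsilon> * \<epsilon> = \<epsilon>"
    and h: "two_sided h = two_sided \<epsilon>" and w: "w * w = w" "two_sided w = two_sided \<epsilon>"
  shows "two_sided (w * h) = two_sided \<epsilon>"
proof -
  obtain u where u: "u * u = u" "two_sided u = two_sided \<epsilon>" "u * h = h"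
    using two_sided_idempotent_left_unit[OF \<epsilon> h, of 1] by auto
  have "h = (u * w * u) * h" using rectangular_idempotents_aba[OF rect u(1) w(1)] u w by simp
  then have "h = u * (w * h)" using u(3) by (metis mult.assoc)
  then have "two_sided h \<subseteq> two_sided (w * h)" by (metis two_sided_mult_subset_right)
  then show ?thesis using h two_sided_mult_subset_right[of w h] by blast
qed

lemma rectangular_absorb_idempotent_right:
  fixes c e g h \<epsilon> :: "'m::{monoid_mult,finite}"
  assumes rect: "rectangular TYPE('m)" and \<epsilon>: "\<epsilon> * \<epsilon> = \<epsilon>" and e: "e * e = e"
    and c: "two_sided c = two_sided \<epsilon>" and ce: "c * e = c"
    and g: "two_sided g = two_sided \<epsilon>" and h: "two_sided h = two_sided \<epsilon>"
  shows "g * e * h = g * h"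
proof -
  obtain u where u: "u * u = u" "two_sided u = two_sided \<epsilon>" "u * e = u"
    using two_sided_idempotent_right_unit[OF \<epsilon> c ce] by blast
  define w where "w = e * u"
  have w: "w * w = w" "e * w = w" "u * w = u"
    using u e by (simp_all add: w_def) (metis mult.assoc)+
  have "two_sided w = two_sided \<epsilon>"
    using u(2) w(3) two_sided_mult_subset_right[of u w] two_sided_mult_subset_right[of e u]
    by (simp add: w_def)
  note insert_w = rectangular_insert_idempotent[OF rect \<epsilon> _ h w(1) this]
  have "two_sided (g * w) = two_sided \<epsilon>"
    using rectangular_two_sided_mult_idempotent_right[OF rect \<epsilon> g w(1)] \<open>two_sided w = _\<close> .
  then have ge: "two_sided (g * e) = two_sided \<epsilon>"
    using g w(2) two_sided_mult_subset_left[of "g * e" w] two_sided_mult_subset_left[of g e]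
    by (auto simp: mult.assoc)
  have "g * e * h = g * e * w * h" using insert_w[OF ge] by (simp add: mult.assoc)
  also have "\<dots> = g * h" using insert_w[OF g] w(2) by (simp add: mult.assoc)
  finally show ?thesis .
qed

lemma rectangular_absorb_idempotent_left:
  fixes c e g h \<epsilon> :: "'m::{monoid_mult,finite}"
  assumes rect: "rectangular TYPE('m)" and \<epsilon>: "\<epsilon> * \<epsilon> = \<epsilon>" and e: "e * e = e"
    and c: "two_sided c = two_sided \<epsilon>" and ec: "e * c = c"
    and g: "two_sided g = two_sided \<epsilon>" and h: "two_sided h = two_sided \<epsilon>"
  shows "g * e * h = g * h"
proof -
  obtain u where u: "u * u = u" "two_sided u = two_sided \<epsilon>" "e * u = u"
    using two_sided_idempotent_left_unit[OF \<epsilon> c ec] by blast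
  define w where "w = u * e"
  have w: "w * w = w" "w * e = w" "w * u = u"
    using u e by (simp_all add: w_def) (metis mult.assoc)+
  have "two_sided w = two_sided \<epsilon>"
    using u(2) w(3) two_sided_mult_subset_left[of w u] two_sided_mult_subset_left[of u e]
    by (simp add: w_def)
  note insert_w = rectangular_insert_idempotent[OF rect \<epsilon> g _ w(1) this]
  have "two_sided (w * h) = two_sided \<epsilon>"
    using rectangular_two_sided_mult_idempotent_left[OF rect \<epsilon> h w(1)] \<open>two_sided w = _\<close> .
  then have eh: "two_sided (e * h) = two_sided \<epsilon>"
    using h w(2) two_sided_mult_subset_right[of w "e * h"] two_sided_mult_subset_right[of e h]
    by (auto simp flip: mult.assoc)
  have "g * e * h = g * w * (e * h)" using insert_w[OF eh] by (simp add: mult.assoc)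
  also have "\<dots> = g * (w * e) * h" by (simp add: mult.assoc)
  also have "\<dots> = g * h" using insert_w[OF h] w(2) by simp
  finally show ?thesis .
qed

lemma two_sided_sandwich_top:
  fixes f g h e :: "'m::{monoid_mult,finite}"
  assumes g: "two_sided g \<subseteq> two_sided f" and h: "two_sided h \<subseteq> two_sided f"
    and top: "two_sided (g * e * h) = two_sided f \<or> two_sided (g * h) = two_sided f"
  shows "two_sided g = two_sided f" "two_sided h = two_sided f"
    and "\<exists>\<epsilon>. \<epsilon> * \<epsilon> = \<epsilon> \<and> two_sided \<epsilon> = two_sided f"
proof -
  have ge: "two_sided (g * e) \<subseteq> two_sided g" by (rule two_sided_mult_subset_left)
  note sub = two_sided_mult_subset_left[of "g * e" h] two_sided_mult_subset_right[of "g * e" h]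
    two_sided_mult_subset_left[of g h] two_sided_mult_subset_right[of g h]
  show "two_sided g = two_sided f" "two_sided h = two_sided f"
    using top g h ge sub by blast+
  from top show "\<exists>\<epsilon>. \<epsilon> * \<epsilon> = \<epsilon> \<and> two_sided \<epsilon> = two_sided f"
  proof
    assume top': "two_sided (g * e * h) = two_sided f"
    then have "two_sided (g * e) = two_sided (g * e * h)" "two_sided h = two_sided (g * e * h)"
      using g h ge sub by blast+
    then show ?thesis using two_sided_idempotent_of_product top' by metis
  next
    assume top': "two_sided (g * h) = two_sided f"
    then have "two_sided g = two_sided (g * h)" "two_sided h = two_sided (g * h)"
      using g h sub by blast+
    then show ?thesis using two_sided_idempotent_of_product top' by metis
  qed
qed

lemma rectangular_sandwich_eme:
  fixes e m f s t :: "'m::{monoid_mult,finite}"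
  assumes rect: "rectangular TYPE('m)" and e: "e * e = e"
  shows "two_sided (f * s * (e * m * e) * t * f) = two_sided f \<or>
           two_sided (f * s * (e * m) * t * f) = two_sided f \<longrightarrow>
         f * s * (e * m * e) * t * f = f * s * (e * m) * t * f"
proof
  define c g h where "c = f * s * e" and "g = f * s * e * m" and "h = t * f"
  assume "two_sided (f * s * (e * m * e) * t * f) = two_sided f \<or>
          two_sided (f * s * (e * m) * t * f) = two_sided f"
  then have top: "two_sided (g * e * h) = two_sided f \<or> two_sided (g * h) = two_sided f"
    by (simp add: g_def h_def mult.assoc)
  have c: "two_sided c \<subseteq> two_sided f" "two_sided g \<subseteq> two_sided c"
    using two_sided_mult_subset_left[of f "s * e"] two_sided_mult_subset_left[of c m]
    by (simp_all add: c_def g_def mult.assoc)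
  note sandwich = two_sided_sandwich_top[of g f h e]
  obtain \<epsilon> where \<epsilon>: "\<epsilon> * \<epsilon> = \<epsilon>" "two_sided \<epsilon> = two_sided f"
    using sandwich(3) c top two_sided_mult_subset_right[of t f] by (auto simp: h_def)
  have "two_sided g = two_sided f" "two_sided h = two_sided f"
    using sandwich(1,2) c top two_sided_mult_subset_right[of t f] by (auto simp: h_def)
  moreover have "two_sided c = two_sided f" "c * e = c"
    using c calculation(1) e by (auto simp: c_def mult.assoc)
  ultimately have "g * e * h = g * h"
    using rectangular_absorb_idempotent_right[OF rect \<epsilon>(1) e] \<epsilon>(2) by simp
  then show "f * s * (e * m * e) * t * f = f * s * (e * m) * t * f"
    by (simp add: g_def h_def mult.assoc)
qed

lemma rectangular_sandwich_ene:
  fixes e n f s t :: "'m::{monoid_mult,finite}"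
  assumes rect: "rectangular TYPE('m)" and e: "e * e = e"
  shows "two_sided (f * s * (n * e) * t * f) = two_sided f \<or>
           two_sided (f * s * (e * n * e) * t * f) = two_sided f \<longrightarrow>
         f * s * (n * e) * t * f = f * s * (e * n * e) * t * f"
proof
  define c g h where "c = e * t * f" and "g = f * s" and "h = n * e * t * f"
  assume "two_sided (f * s * (n * e) * t * f) = two_sided f \<or>
          two_sided (f * s * (e * n * e) * t * f) = two_sided f"
  then have top: "two_sided (g * e * h) = two_sided f \<or> two_sided (g * h) = two_sided f"
    by (auto simp: g_def h_def mult.assoc)
  have c: "two_sided c \<subseteq> two_sided f" "two_sided h \<subseteq> two_sided c"
    using two_sided_mult_subset_right[of "e * t" f] two_sided_mult_subset_right[of n c]
    by (simp_all add: c_def h_def mult.assoc)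
  note sandwich = two_sided_sandwich_top[of g f h e]
  obtain \<epsilon> where \<epsilon>: "\<epsilon> * \<epsilon> = \<epsilon>" "two_sided \<epsilon> = two_sided f"
    using sandwich(3) c top two_sided_mult_subset_left[of f s] by (auto simp: g_def)
  have "two_sided g = two_sided f" "two_sided h = two_sided f"
    using sandwich(1,2) c top two_sided_mult_subset_left[of f s] by (auto simp: g_def)
  moreover have "two_sided c = two_sided f" "e * c = c"
    using c calculation(2) e by (auto simp: c_def simp flip: mult.assoc)
  ultimately have "g * e * h = g * h"
    using rectangular_absorb_idempotent_left[OF rect \<epsilon>(1) e] \<epsilon>(2) by simp
  then show "f * s * (n * e) * t * f = f * s * (e * n * e) * t * f"
    by (simp add: g_def h_def mult.assoc)
qed

section \<open>The monoid algebra\<close>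

lemma conv_eq_double_sum:
  fixes f g :: "'m::{monoid_mult,finite} \<Rightarrow> 'k::field"
  shows "conv f g m = (\<Sum>x\<in>UNIV. \<Sum>y\<in>UNIV. if x * y = m then f x * g y else 0)"
proof -
  have "conv f g m = (\<Sum>p\<in>UNIV. if fst p * snd p = m then f (fst p) * g (snd p) else 0)"
    unfolding conv_def by (simp add: sum.inter_filter[symmetric])
  also have "\<dots> = (\<Sum>p\<in>UNIV \<times> UNIV. if fst p * snd p = m then f (fst p) * g (snd p) else 0)"
    by simp
  also have "\<dots> = (\<Sum>x\<in>UNIV. \<Sum>y\<in>UNIV. if x * y = m then f x * g y else 0)"
    by (subst sum.cartesian_product) (simp add: case_prod_beta)
  finally show ?thesis .
qed

lemma sum_fibre_collapse:
  fixes F :: "'a::finite \<Rightarrow> 'b::finite \<Rightarrow> 'c::comm_monoid_add" and \<phi> :: "'a \<Rightarrow> 'b \<Rightarrow> 'd::finite"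
  shows "(\<Sum>w\<in>UNIV. \<Sum>x\<in>UNIV. \<Sum>y\<in>UNIV. if \<phi> x y = w \<and> P w then F x y else 0) =
         (\<Sum>x\<in>UNIV. \<Sum>y\<in>UNIV. if P (\<phi> x y) then F x y else 0)"
proof -
  have "(\<Sum>w\<in>UNIV. \<Sum>x\<in>UNIV. \<Sum>y\<in>UNIV. if \<phi> x y = w \<and> P w then F x y else 0) =
        (\<Sum>x\<in>UNIV. \<Sum>y\<in>UNIV. \<Sum>w\<in>UNIV. if \<phi> x y = w \<and> P w then F x y else 0)"
    by (subst sum.swap) (rule sum.cong[OF refl], rule sum.swap)
  also have "\<dots> = (\<Sum>x\<in>UNIV. \<Sum>y\<in>UNIV. if P (\<phi> x y) then F x y else 0)"
    by (intro sum.cong refl) (simp add: sum.delta' flip: if_if_eq_conj cong: if_cong)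
  finally show ?thesis .
qed

lemma conv_assoc:
  fixes f g h :: "'m::{monoid_mult,finite} \<Rightarrow> 'k::field"
  shows "conv (conv f g) h = conv f (conv g h)"
proof
  fix m
  have "conv (conv f g) h m =
      (\<Sum>z\<in>UNIV. \<Sum>w\<in>UNIV. \<Sum>x\<in>UNIV. \<Sum>y\<in>UNIV. if x * y = w \<and> w * z = m then f x * g y * h z else 0)"
    unfolding conv_eq_double_sum[of "conv f g"] conv_eq_double_sum[of f g]
    by (subst sum.swap) (auto simp: sum_distrib_right intro!: sum.cong)
  also have "\<dots> = (\<Sum>z\<in>UNIV. \<Sum>x\<in>UNIV. \<Sum>y\<in>UNIV. if x * y * z = m then f x * g y * h z else 0)"
    by (simp only: sum_fibre_collapse)
  also have "\<dots> = (\<Sum>x\<in>UNIV. \<Sum>z\<in>UNIV. \<Sum>y\<in>UNIV. if x * y * z = m then f x * g y * h z else 0)"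
    by (rule sum.swap)
  also have "\<dots> = (\<Sum>x\<in>UNIV. \<Sum>y\<in>UNIV. \<Sum>z\<in>UNIV. if x * (y * z) = m then f x * g y * h z else 0)"
    by (rule sum.cong[OF refl], rule trans[OF sum.swap]) (simp only: mult.assoc)
  also have "\<dots> = (\<Sum>x\<in>UNIV. \<Sum>u\<in>UNIV. \<Sum>y\<in>UNIV. \<Sum>z\<in>UNIV. if y * z = u \<and> x * u = m then f x * g y * h z else 0)"
    by (simp only: sum_fibre_collapse)
  also have "\<dots> = conv f (conv g h) m"
    unfolding conv_eq_double_sum[of f "conv g h"] conv_eq_double_sum[of g h]
    by (auto simp: sum_distrib_left mult.assoc intro!: sum.cong)
  finally show "conv (conv f g) h m = conv f (conv g h) m" .
qed

lemma conv_delta_left: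
  fixes h :: "'m::{monoid_mult,finite} \<Rightarrow> 'k::field"
  shows "conv (delta a) h m = (\<Sum>y\<in>UNIV. if a * y = m then h y else 0)"
proof -
  have "conv (delta a) h m =
      (\<Sum>x\<in>UNIV. if x = a then (\<Sum>y\<in>UNIV. if x * y = m then h y else 0) else 0)"
    unfolding conv_eq_double_sum by (rule sum.cong) (auto simp: delta_def cong: if_cong)
  then show ?thesis by (simp add: sum.delta)
qed

lemma conv_delta_delta: "conv (delta a) (delta b) = (delta (a * b) :: 'm::{monoid_mult,finite} \<Rightarrow> 'k::field)"
proof
  fix m
  have "conv (delta a) (delta b) m = (\<Sum>y\<in>UNIV. if y = b then (if a * y = m then 1 else 0) else (0::'k))"
    unfolding conv_delta_left by (rule sum.cong) (auto simp: delta_def)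
  then show "conv (delta a) (delta b) m = (delta (a * b) m :: 'k)"
    by (simp add: sum.delta delta_def eq_commute)
qed

lemma conv_add_left: "conv (\<lambda>x. f x + g x) h = (\<lambda>m. conv f h m + conv g h m)"
  unfolding conv_def by (simp add: distrib_right sum.distrib)

lemma conv_add_right: "conv h (\<lambda>x. f x + g x) = (\<lambda>m. conv h f m + conv h g m)"
  unfolding conv_def by (simp add: distrib_left sum.distrib)

lemma conv_diff_left: "conv (\<lambda>x. f x - g x) h = (\<lambda>m. conv f h m - conv g h m)"
  unfolding conv_def by (simp add: left_diff_distrib sum_subtractf)

lemma conv_diff_right: "conv h (\<lambda>x. f x - g x) = (\<lambda>m. conv h f m - conv h g m)"
  unfolding conv_def by (simp add: right_diff_distrib sum_subtractf)

lemma conv_uminus_left: "conv (\<lambda>x. - f x) h = (\<lambda>m. - conv f h m)"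
  unfolding conv_def by (simp add: sum_negf)

lemma conv_zero_left: "conv (\<lambda>_. 0) h = (\<lambda>_. 0)"
  unfolding conv_def by simp

lemma conv_scale_left: "conv (\<lambda>x. c * f x) h = (\<lambda>m. c * conv f h m)"
  unfolding conv_def by (simp add: sum_distrib_left mult.assoc)

lemma conv_sum_left:
  "conv (\<lambda>x. \<Sum>u\<in>U. c u * F u x) h = (\<lambda>m. \<Sum>u\<in>U. c u * conv (F u) h m)"
  unfolding conv_def by (rule ext) (simp add: sum_distrib_left sum_distrib_right mult_ac sum.swap[of _ U])

lemma conv_sum_right:
  "conv h (\<lambda>x. \<Sum>u\<in>U. c u * F u x) = (\<lambda>m. \<Sum>u\<in>U. c u * conv h (F u) m)"
  unfolding conv_def by (rule ext) (simp add: sum_distrib_left mult_ac sum.swap[of _ U])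

lemma sum_delta_expansion: "(\<lambda>x. \<Sum>u\<in>UNIV. d u * delta u x) = (d :: 'm::finite \<Rightarrow> 'k::field)"
  by (rule ext) (simp add: delta_def if_distrib[of "(*) _"] sum.delta cong: if_cong)

lemma conv_delta_one_left: "conv (delta 1) h = (h :: 'm::{monoid_mult,finite} \<Rightarrow> 'k::field)"
  using conv_sum_right[of "delta 1" h delta UNIV] by (simp add: sum_delta_expansion conv_delta_delta)

lemma conv_delta_one_right: "conv h (delta 1) = (h :: 'm::{monoid_mult,finite} \<Rightarrow> 'k::field)"
  using conv_sum_left[of h delta UNIV "delta 1"] by (simp add: sum_delta_expansion conv_delta_delta)

lemma conv_expand_middle:
  fixes X d Z :: "'m::{monoid_mult,finite} \<Rightarrow> 'k::field"
  shows "conv (conv X d) Z = (\<lambda>m. \<Sum>u\<in>UNIV. d u * conv (conv X (delta u)) Z m)"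
proof -
  have "conv X d = (\<lambda>m. \<Sum>u\<in>UNIV. d u * conv X (delta u) m)"
    using conv_sum_right[of X d delta UNIV] by (simp add: sum_delta_expansion)
  then show ?thesis by (simp add: conv_sum_left)
qed

lemma left_idealD:
  assumes "left_ideal I"
  shows left_ideal_zero: "(\<lambda>_. 0) \<in> I"
    and left_ideal_add: "x \<in> I \<Longrightarrow> y \<in> I \<Longrightarrow> (\<lambda>t. x t + y t) \<in> I"
    and left_ideal_uminus: "x \<in> I \<Longrightarrow> (\<lambda>t. - x t) \<in> I"
    and left_ideal_conv: "x \<in> I \<Longrightarrow> conv a x \<in> I"
  using assms unfolding left_ideal_def by blast+

lemma left_ideal_diff:
  assumes "left_ideal I" "x \<in> I" "y \<in> I"
  shows "(\<lambda>t. x t - y t) \<in> I"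
  using left_ideal_add[OF assms(1,2) left_ideal_uminus[OF assms(1,3)]] by simp

lemma left_ideal_weighted_sum:
  fixes I :: "('m::{monoid_mult,finite} \<Rightarrow> 'k::field) set"
  assumes I: "left_ideal I" and F: "\<And>u. F u \<in> I"
  shows "(\<lambda>t. \<Sum>u\<in>U. c u * F u t) \<in> I"
proof -
  have scaled: "(\<lambda>t. c u * F u t) \<in> I" for u
    using left_ideal_conv[OF I F[of u], where a = "\<lambda>x. c u * delta 1 x"]
    by (simp add: conv_scale_left conv_delta_one_left)
  show ?thesis
  proof (induction U rule: infinite_finite_induct)
    case (insert u U)
    then show ?case using left_ideal_add[OF I scaled[of u]] by simp
  qed (simp_all add: left_ideal_zero[OF I])
qed

lemma maximal_left_ideal_generated:
  fixes I :: "('m::{monoid_mult,finite} \<Rightarrow> 'k::field) set"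
  assumes max: "maximal_left_ideal I" and v: "v \<notin> I"
  obtains c i where "i \<in> I" "t = (\<lambda>x. conv c v x + i x)"
proof -
  have I: "left_ideal I" using max by (simp add: maximal_left_ideal_def)
  define L where "L = {t. \<exists>c. \<exists>i\<in>I. t = (\<lambda>x. conv c v x + i x)}"
  have "left_ideal L"
    unfolding left_ideal_def
  proof (intro conjI ballI allI)
    show "(\<lambda>_. 0) \<in> L"
      using left_ideal_zero[OF I] unfolding L_def by (auto intro!: exI[of _ "\<lambda>_. 0"] simp: conv_zero_left)
  next
    fix x y assume "x \<in> L" "y \<in> L"
    then obtain c1 i1 c2 i2 where "i1 \<in> I" "x = (\<lambda>t. conv c1 v t + i1 t)"
      "i2 \<in> I" "y = (\<lambda>t. conv c2 v t + i2 t)" unfolding L_def by blast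
    then show "(\<lambda>t. x t + y t) \<in> L"
      using left_ideal_add[OF I] unfolding L_def
      by (auto intro!: exI[of _ "\<lambda>t. c1 t + c2 t"] bexI[of _ "\<lambda>t. i1 t + i2 t"] simp: conv_add_left)
  next
    fix x assume "x \<in> L"
    then obtain c i where "i \<in> I" "x = (\<lambda>t. conv c v t + i t)" unfolding L_def by blast
    then show "(\<lambda>t. - x t) \<in> L"
      using left_ideal_uminus[OF I] unfolding L_def
      by (auto intro!: exI[of _ "\<lambda>t. - c t"] bexI[of _ "\<lambda>t. - i t"] simp: conv_uminus_left)
  next
    fix a x assume "x \<in> L"
    then obtain c i where "i \<in> I" "x = (\<lambda>t. conv c v t + i t)" unfolding L_def by blast
    then show "conv a x \<in> L"
      using left_ideal_conv[OF I] unfolding L_def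
      by (auto intro!: exI[of _ "conv a c"] bexI[of _ "conv a i"] simp: conv_add_right conv_assoc)
  qed
  moreover have "I \<subseteq> L"
    unfolding L_def by (auto intro!: exI[of _ "\<lambda>_. 0"] simp: conv_zero_left)
  moreover have "v \<in> L"
    using left_ideal_zero[OF I] unfolding L_def
    by (auto intro!: exI[of _ "delta 1"] bexI[of _ "\<lambda>_. 0"] simp: conv_delta_one_left)
  ultimately have "L = UNIV" using max v unfolding maximal_left_ideal_def by blast
  then show ?thesis using that unfolding L_def by blast
qed

section \<open>Simple modules and the radical\<close>

text \<open>For a maximal left ideal \<open>I\<close>, \<open>annihilates I X\<close> says that \<open>X\<close> acts as zero on the
  simple module \<open>kM/I\<close>.\<close>

definition annihilates :: "('m::monoid_mult \<Rightarrow> 'k::field) set \<Rightarrow> ('m \<Rightarrow> 'k) \<Rightarrow> bool" where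
  "annihilates I X \<longleftrightarrow> (\<forall>r. conv X r \<in> I)"

lemma annihilates_diff:
  fixes I :: "('m::{monoid_mult,finite} \<Rightarrow> 'k::field) set"
  assumes "left_ideal I" "annihilates I X" "annihilates I Y"
  shows "annihilates I (\<lambda>x. X x - Y x)"
  using assms left_ideal_diff unfolding annihilates_def conv_diff_left by blast

lemma annihilates_by_right_multiples:
  fixes I :: "('m::{monoid_mult,finite} \<Rightarrow> 'k::field) set"
  assumes max: "maximal_left_ideal I" and f: "\<not> annihilates I (delta f)"
    and X: "\<And>u. annihilates I (conv X (delta (u * f)))"
  shows "annihilates I X"
  unfolding annihilates_def
proof
  fix W
  have I: "left_ideal I" using max by (simp add: maximal_left_ideal_def)
  obtain r where r: "conv (delta f) r \<notin> I" using f unfolding annihilates_def by blast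
  \<comment> \<open>\<open>\<delta>\<^sub>f r\<close> generates \<open>kM/I\<close>, so \<open>1 \<equiv> c \<delta>\<^sub>f r\<close> and \<open>X W \<equiv> X W c \<delta>\<^sub>f r\<close> modulo \<open>I\<close>.\<close>
  obtain c i where i: "i \<in> I" and one: "delta 1 = (\<lambda>x. conv c (conv (delta f) r) x + i x)"
    using maximal_left_ideal_generated[OF max r] by blast
  have "conv (conv X W) (conv c (conv (delta f) r)) = conv (conv X (conv W c)) (conv (delta f) r)"
    by (simp only: conv_assoc)
  also have "\<dots> = (\<lambda>m. \<Sum>u\<in>UNIV. conv W c u * conv (conv X (delta u)) (conv (delta f) r) m)"
    by (rule conv_expand_middle)
  also have "\<dots> = (\<lambda>m. \<Sum>u\<in>UNIV. conv W c u * conv (conv X (delta (u * f))) r m)"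
    by (simp only: conv_assoc conv_delta_delta[symmetric])
  finally have "conv (conv X W) (conv c (conv (delta f) r)) \<in> I"
    using left_ideal_weighted_sum[OF I, of "\<lambda>u. conv (conv X (delta (u * f))) r"] X
    unfolding annihilates_def by simp
  moreover have "conv (conv X W) i \<in> I" using left_ideal_conv[OF I i] .
  ultimately have "conv (conv X W) (delta 1) \<in> I"
    using left_ideal_add[OF I] by (simp add: one conv_add_right)
  then show "conv X W \<in> I" by (simp add: conv_delta_one_right)
qed

lemma annihilates_by_left_multiples:
  fixes I :: "('m::{monoid_mult,finite} \<Rightarrow> 'k::field) set"
  assumes max: "maximal_left_ideal I" and f: "\<not> annihilates I (delta f)"
    and X: "\<And>u. annihilates I (conv (delta (f * u)) X)"
  shows "annihilates I X"
proof (rule ccontr)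
  have I: "left_ideal I" using max by (simp add: maximal_left_ideal_def)
  assume "\<not> annihilates I X"
  then obtain r where r: "conv X r \<notin> I" unfolding annihilates_def by blast
  \<comment> \<open>\<open>X r\<close> generates \<open>kM/I\<close>, and \<open>\<delta>\<^sub>f kM X r \<subseteq> I\<close>.\<close>
  have "annihilates I (delta f)"
    unfolding annihilates_def
  proof
    fix s
    obtain c i where i: "i \<in> I" and s: "s = (\<lambda>x. conv c (conv X r) x + i x)"
      using maximal_left_ideal_generated[OF max r] by blast
    have "conv (delta f) (conv c (conv X r)) = conv (conv (delta f) c) (conv X r)"
      by (simp only: conv_assoc)
    also have "\<dots> = (\<lambda>m. \<Sum>u\<in>UNIV. c u * conv (conv (delta f) (delta u)) (conv X r) m)"
      by (rule conv_expand_middle)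
    also have "\<dots> = (\<lambda>m. \<Sum>u\<in>UNIV. c u * conv (conv (delta (f * u)) X) r m)"
      by (simp only: conv_assoc conv_delta_delta[symmetric])
    finally have "conv (delta f) (conv c (conv X r)) \<in> I"
      using left_ideal_weighted_sum[OF I, of "\<lambda>u. conv (conv (delta (f * u)) X) r"] X
      unfolding annihilates_def by simp
    then show "conv (delta f) s \<in> I"
      using left_ideal_add[OF I _ left_ideal_conv[OF I i]] by (simp add: s conv_add_right)
  qed
  with f show False ..
qed

lemma maximal_left_ideal_apex:
  fixes I :: "('m::{monoid_mult,finite} \<Rightarrow> 'k::field) set"
  assumes max: "maximal_left_ideal I"
  obtains f where "\<not> annihilates I (delta f)"
    "\<And>y. two_sided y \<subset> two_sided f \<Longrightarrow> annihilates I (delta y)"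
proof -
  have "\<not> annihilates I (delta 1)"
    using max by (auto simp: annihilates_def conv_delta_one_left maximal_left_ideal_def)
  then obtain f where f: "\<not> annihilates I (delta f)"
    and least: "\<And>y. \<not> annihilates I (delta y) \<Longrightarrow> card (two_sided f) \<le> card (two_sided y)"
    using ex_has_least_nat[of "\<lambda>x. \<not> annihilates I (delta x)" 1 "\<lambda>x. card (two_sided x)"] by blast
  have "annihilates I (delta y)" if "two_sided y \<subset> two_sided f" for y
    using least[of y] psubset_card_mono[OF finite that] by linarith
  with f show ?thesis using that by blast
qed

lemma delta_diff_mem_maximal_left_ideal:
  fixes I :: "('m::{monoid_mult,finite} \<Rightarrow> 'k::field) set"
  assumes max: "maximal_left_ideal I"
    and sandwich: "\<And>f s t. two_sided (f * s * a * t * f) = two_sided f \<or>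
                     two_sided (f * s * b * t * f) = two_sided f \<Longrightarrow>
                   f * s * a * t * f = f * s * b * t * f"
  shows "(\<lambda>x. delta a x - delta b x) \<in> I"
proof -
  have I: "left_ideal I" using max by (simp add: maximal_left_ideal_def)
  obtain f where f: "\<not> annihilates I (delta f)"
    and below: "\<And>y. two_sided y \<subset> two_sided f \<Longrightarrow> annihilates I (delta y)"
    using maximal_left_ideal_apex[OF max] by blast
  have sandwich_annihilates:
    "annihilates I (\<lambda>x. delta (f * s * a * t * f) x - delta (f * s * b * t * f) x)" for s t
  proof (cases "f * s * a * t * f = f * s * b * t * f")
    case True
    then show ?thesis using left_ideal_zero[OF I] by (simp add: annihilates_def conv_zero_left)
  next
    case False
    have "two_sided (f * s * x * t * f) \<subseteq> two_sided f" for x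
      by (rule two_sided_mult_subset_right)
    with False sandwich have "two_sided (f * s * a * t * f) \<subset> two_sided f"
      "two_sided (f * s * b * t * f) \<subset> two_sided f"
      by blast+
    then have "annihilates I (delta (f * s * a * t * f))" "annihilates I (delta (f * s * b * t * f))"
      by (simp_all add: below)
    then show ?thesis by (rule annihilates_diff[OF I])
  qed
  have "annihilates I (\<lambda>x. delta a x - delta b x)"
  proof (rule annihilates_by_left_multiples[OF max f])
    fix s
    have "annihilates I (\<lambda>x. delta (f * s * a) x - delta (f * s * b) x)"
    proof (rule annihilates_by_right_multiples[OF max f])
      fix t
      show "annihilates I (conv (\<lambda>x. delta (f * s * a) x - delta (f * s * b) x) (delta (t * f)))"
        using sandwich_annihilates[of s t] by (simp add: conv_diff_left conv_delta_delta mult.assoc)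
    qed
    then show "annihilates I (conv (delta (f * s)) (\<lambda>x. delta a x - delta b x))"
      by (simp add: conv_diff_right conv_delta_delta)
  qed
  then show ?thesis
    unfolding annihilates_def by (metis conv_delta_one_right)
qed

lemma delta_diff_mem_jrad:
  fixes a b :: "'m::{monoid_mult,finite}"
  assumes "\<And>f s t. two_sided (f * s * a * t * f) = two_sided f \<or>
             two_sided (f * s * b * t * f) = two_sided f \<Longrightarrow>
           f * s * a * t * f = f * s * b * t * f"
  shows "(\<lambda>x. delta a x - delta b x :: 'k::field) \<in> jrad"
  unfolding jrad_def using delta_diff_mem_maximal_left_ideal assms by blast

section \<open>The square of the radical\<close>

lemma rectangular_rad2:
  fixes e m n :: "'m::{monoid_mult,finite}"
  assumes rect: "rectangular TYPE('m)" and "e \<in> idempotents"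
  shows "(e * m * e * n * e, e * m * n * e) \<in> rad2 TYPE('k::field)"
proof -
  have e: "e * e = e" using assms(2) by (simp add: idempotents_def)
  have "(\<lambda>x. delta (e * m * e) x - delta (e * m) x :: 'k) \<in> jrad"
    by (rule delta_diff_mem_jrad) (use rectangular_sandwich_eme[OF rect e] in blast)
  moreover have "(\<lambda>x. delta (n * e) x - delta (e * n * e) x :: 'k) \<in> jrad"
    by (rule delta_diff_mem_jrad) (use rectangular_sandwich_ene[OF rect e] in blast)
  ultimately have "conv (\<lambda>x. delta (e * m * e) x - delta (e * m) x)
      (\<lambda>x. delta (n * e) x - delta (e * n * e) x) \<in> (rad_sq :: ('m \<Rightarrow> 'k) set)"
    by (rule rad_sq.prod)
  moreover have "e * (e * x) = e * x" for x using e by (simp flip: mult.assoc)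
  ultimately show ?thesis
    by (simp add: rad2_def conv_diff_left conv_diff_right conv_delta_delta mult.assoc)
qed

lemma band_rectangular:
  assumes band: "band TYPE('b::monoid_mult)"
  shows "rectangular TYPE('b)"
proof -
  have idem: "x * x = x" for x :: 'b using band by (simp add: band_def)
  then have idem_left: "x * (x * y) = x * y" for x y :: 'b by (metis mult.assoc)
  have "f \<in> two_sided (f * g)" if "two_sided f = two_sided g" for f g :: 'b
  proof -
    have "f \<in> two_sided g" using that self_mem_two_sided[of f] by simp
    then obtain a b where ab: "f = a * g * b" by (auto simp: two_sided_def)
    define P Q where "P = f * a * g" and "Q = g * b * f"
    have PQ: "P * Q = f"
      using ab idem by (simp add: P_def Q_def mult.assoc) (metis mult.assoc)
    have "f = (P * Q) * (P * Q)" using PQ idem by simp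
    also have "\<dots> = P * (Q * Q) * (P * P) * Q" by (simp only: idem[of P] idem[of Q] mult.assoc)
    also have "\<dots> = (P * Q) * (Q * P) * (P * Q)" by (simp add: mult.assoc)
    also have "\<dots> = f * (Q * P) * f" by (simp only: PQ)
    also have "\<dots> = 1 * (f * g) * (b * f * a * g * f)"
      by (simp add: P_def Q_def mult.assoc idem_left)
    finally show ?thesis by (metis two_sided_memI)
  qed
  then have "two_sided (f * g) = two_sided f" if "two_sided f = two_sided g" for f g :: 'b
    using that two_sided_mult_subset_left[of f g] two_sided_subset_iff by blast
  then show ?thesis
    unfolding rectangular_def idempotents_def using idem by simp
qed

theorem mainTheorem13:
  fixes e m n :: "'m::{monoid_mult, finite}"
  assumes "rectangular TYPE('m)"
    and "e \<in> idempotents"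
  shows "(e * m * e * n * e, e * m * n * e) \<in> rad2 TYPE('k::field) \<and>
         (band TYPE('b::{monoid_mult, finite}) \<longrightarrow>
          (\<forall>x :: 'b. (x * x, x) \<in> rad2 TYPE('k)) \<and>
          (\<forall>x y z :: 'b. (x * y * x * z * x, x * y * z * x) \<in> rad2 TYPE('k)))"
proof (intro conjI impI allI)
  show "(e * m * e * n * e, e * m * n * e) \<in> rad2 TYPE('k)"
    using assms by (rule rectangular_rad2)
next
  fix x :: 'b
  assume "band TYPE('b)"
  then show "(x * x, x) \<in> rad2 TYPE('k)"
    using rad_sq.zero by (simp add: band_def rad2_def)
next
  fix x y z :: 'b
  assume band: "band TYPE('b)"
  then have "x \<in> idempotents" by (simp add: band_def idempotents_def)
  with band_rectangular[OF band] show "(x * y * x * z * x, x * y * z * x) \<in> rad2 TYPE('k)"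
    by (rule rectangular_rad2)
qed

end
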